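(* Let $h,p,K>0$ and define $H(x)=h\max(x,0)+p\max(-x,0)$ and $\delta(u)=1$ if $u>0$, $\delta(u)=0$ if $u=0$. Fix an initial inventory level $x_0\in\mathbb{R}$, a horizon $N\ge1$ and a demand sample path $\omega=(d_1,\dots,d_N)$ of nonnegative demands. For order quantities $u_1\ge 0$ define \[J_N(u_1,\omega)=H(x_1)+K\delta(u_1)+\min_{u_2,\dots,u_N\ge 0}\sum_{i=2}^N\big(H(x_i)+K\delta(u_i)\big),\] where $x_i=x_{i-1}-d_i+u_i$ for $i=1,\dots,N$. Then $J_N(u_1,\omega)$ is $K$-convex in $u_1$ on $u_1>0$, i.e. for all $0<u_1<u_1'<u_1''$, \[K+J_N(u_1'',\omega)\ge J_N(u_1',\omega)+\frac{u_1''-u_1'}{u_1'-u_1}\big(J_N(u_1',\omega)-J_N(u_1,\omega)\big).\]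
   Context: This is a periodic-review inventory model with fixed setup cost $K$ per order, holding cost rate $h$, backlog penalty rate $p$, full backlogging; $x_i$ is the inventory level at the end of period $i$, $u_i$ the order quantity placed at the beginning of period $i$, $d_i$ the demand in period $i$. *)

theory Defs
  imports Complex_Main
begin

definition Hcost :: "real \<Rightarrow> real \<Rightarrow> real \<Rightarrow> real" where
  "Hcost h p x = h * max x 0 + p * max (- x) 0"

definition delta :: "real \<Rightarrow> real" where
  "delta u = (if u > 0 then 1 else 0)"

primrec traj :: "real \<Rightarrow> (nat \<Rightarrow> real) \<Rightarrow> (nat \<Rightarrow> real) \<Rightarrow> nat \<Rightarrow> real" where
  "traj x0 d u 0 = x0"
| "traj x0 d u (Suc i) = traj x0 d u i - d (Suc i) + u (Suc i)"

definition JN :: "real \<Rightarrow> real \<Rightarrow> real \<Rightarrow> nat \<Rightarrow> real \<Rightarrow> (nat \<Rightarrow> real) \<Rightarrow> real \<Rightarrow> real" where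
  "JN h p K N x0 d u1 =
     Hcost h p (traj x0 d ((\<lambda>_. 0)(1 := u1)) 1) + K * delta u1
     + (INF u \<in> {u :: nat \<Rightarrow> real. \<forall>i. 0 \<le> u i}.
          \<Sum>i = 2..N. Hcost h p (traj x0 d (u(1 := u1)) i) + K * delta (u i))"

end

theory Submission
  imports Defs "HOL-Analysis.Convex"
begin

text \<open>Scarf's argument. Let \<open>V\<^sub>n(x)\<close> be the optimal cost of \<open>n\<close> periods started at
  inventory level \<open>x\<close> and \<open>G\<^sub>n = H + V\<^sub>n\<close> the cost-to-go. Dynamic programming gives
  \<open>V\<^sub>n\<^sub>+\<^sub>1(y) = inf\<^sub>v\<^sub>\<ge>\<^sub>0 K\<delta>(v) + G\<^sub>n(y - d + v)\<close>. K-convexity is preserved by adding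
  a convex function such as \<open>H\<close>, by translation, and by the operator
  \<open>G \<mapsto> inf\<^sub>v\<^sub>\<ge>\<^sub>0 K\<delta>(v) + G(\<cdot> + v)\<close>, so every \<open>G\<^sub>n\<close> is K-convex. For \<open>u\<^sub>1 > 0\<close> the
  setup cost is paid in period 1, and \<open>J\<^sub>N(u\<^sub>1) = K + G\<^sub>N\<^sub>-\<^sub>1(x\<^sub>0 - d\<^sub>1 + u\<^sub>1)\<close> is a
  translate of a K-convex function.\<close>

section \<open>K-convex functions\<close>

text \<open>Three-point form of K-convexity; \<open>K_convex_slope\<close> recovers Scarf's slope form.\<close>

definition K_convex :: "real \<Rightarrow> (real \<Rightarrow> real) \<Rightarrow> bool" where
  "K_convex K G \<longleftrightarrow> (\<forall>a b c. a < b \<longrightarrow> b < c \<longrightarrow>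
     G b \<le> (c - b) / (c - a) * G a + (b - a) / (c - a) * (K + G c))"

lemma K_convexD:
  "K_convex K G \<Longrightarrow> a < b \<Longrightarrow> b < c \<Longrightarrow>
     G b \<le> (c - b) / (c - a) * G a + (b - a) / (c - a) * (K + G c)"
  unfolding K_convex_def by blast

lemma weight_complement:
  fixes a b c :: real
  assumes "a < c"
  shows "(b - a) / (c - a) = 1 - (c - b) / (c - a)"
  using assms by (simp add: field_simps)

lemma K_convex_slope:
  assumes "K_convex K G" "a < b" "b < c"
  shows "G b + (c - b) / (b - a) * (G b - G a) \<le> K + G c"
proof -
  have "(c - a) * G b \<le> (c - a) * ((c - b) / (c - a) * G a + (b - a) / (c - a) * (K + G c))"
    using K_convexD[OF assms] assms by (intro mult_left_mono) auto
  also have "\<dots> = (c - b) * G a + (b - a) * (K + G c)"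
    using assms by (simp add: distrib_left)
  finally have "(c - a) * G b \<le> (c - b) * G a + (b - a) * (K + G c)" .
  then have "(c - b) * (G b - G a) \<le> (b - a) * (K + G c - G b)"
    by (simp add: algebra_simps)
  then show ?thesis
    using assms by (simp add: field_simps)
qed

lemma K_convex_translate:
  assumes "K_convex K G"
  shows "K_convex K (\<lambda>x. G (x + t))"
  unfolding K_convex_def
proof (intro allI impI)
  fix a b c :: real
  assume "a < b" "b < c"
  then have "G (b + t) \<le> ((c + t) - (b + t)) / ((c + t) - (a + t)) * G (a + t)
      + ((b + t) - (a + t)) / ((c + t) - (a + t)) * (K + G (c + t))"
    by (intro K_convexD[OF assms]) auto
  then show "G (b + t) \<le> (c - b) / (c - a) * G (a + t) + (b - a) / (c - a) * (K + G (c + t))"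
    by simp
qed

lemma convex_on_three_points:
  fixes f :: "real \<Rightarrow> real"
  assumes "convex_on UNIV f" "a < b" "b < c"
  shows "f b \<le> (c - b) / (c - a) * f a + (b - a) / (c - a) * f c"
proof -
  have "convex_on {a..c} f"
    using assms(1) by (rule convex_on_subset) auto
  then have "f b \<le> (f c - f a) / (c - a) * (b - a) + f a"
    using assms by (intro convex_onD_Icc') auto
  also have "\<dots> = (c - b) / (c - a) * f a + (b - a) / (c - a) * f c"
    using assms by (simp add: divide_simps) (simp add: algebra_simps)
  finally show ?thesis .
qed

lemma K_convex_add_convex:
  assumes "convex_on UNIV f" "K_convex K G"
  shows "K_convex K (\<lambda>x. f x + G x)"
  unfolding K_convex_def
proof (intro allI impI)
  fix a b c :: real
  assume "a < b" "b < c"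
  with assms have "f b + G b \<le> ((c - b) / (c - a) * f a + (b - a) / (c - a) * f c)
      + ((c - b) / (c - a) * G a + (b - a) / (c - a) * (K + G c))"
    by (intro add_mono convex_on_three_points K_convexD)
  then show "f b + G b \<le> (c - b) / (c - a) * (f a + G a) + (b - a) / (c - a) * (K + (f c + G c))"
    by (simp add: distrib_left)
qed

lemma convex_imp_K_convex:
  assumes "convex_on UNIV f" "0 \<le> K"
  shows "K_convex K f"
proof -
  have "K_convex K (\<lambda>_. 0)"
    using assms(2) by (auto simp: K_convex_def)
  from K_convex_add_convex[OF assms(1) this] show ?thesis
    by simp
qed

lemma convex_on_max:
  assumes "convex_on S f" "convex_on S g"
  shows "convex_on S (\<lambda>x. max (f x) (g x))"
  unfolding convex_on_def
proof (intro conjI ballI allI impI)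
  show "convex S"
    using assms(1) by (rule convex_on_imp_convex)
  fix x y and u v :: real
  assume "x \<in> S" "y \<in> S" "0 \<le> u" "0 \<le> v" "u + v = 1"
  then have "f (u *\<^sub>R x + v *\<^sub>R y) \<le> u * f x + v * f y"
    and "g (u *\<^sub>R x + v *\<^sub>R y) \<le> u * g x + v * g y"
    using assms by (auto simp: convex_on_def)
  moreover have "u * f x + v * f y \<le> u * max (f x) (g x) + v * max (f y) (g y)"
    and "u * g x + v * g y \<le> u * max (f x) (g x) + v * max (f y) (g y)"
    using \<open>0 \<le> u\<close> \<open>0 \<le> v\<close> by (intro add_mono mult_left_mono; simp)+
  ultimately show "max (f (u *\<^sub>R x + v *\<^sub>R y)) (g (u *\<^sub>R x + v *\<^sub>R y))
      \<le> u * max (f x) (g x) + v * max (f y) (g y)"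
    by linarith
qed

lemma convex_Hcost:
  assumes "0 \<le> h" "0 \<le> p"
  shows "convex_on UNIV (Hcost h p)"
proof -
  have "convex_on UNIV (\<lambda>x::real. - x)"
    by (simp add: convex_on_iff_concave concave_on_ident)
  then have "convex_on UNIV (\<lambda>x. h * max x 0 + p * max (- x) 0)"
    using assms by (intro convex_on_add convex_on_cmul convex_on_max)
      (auto simp: convex_on_ident convex_on_const)
  then show ?thesis
    by (simp add: Hcost_def[abs_def])
qed

section \<open>The ordering operator\<close>

definition optimal_order_cost :: "real \<Rightarrow> (real \<Rightarrow> real) \<Rightarrow> real \<Rightarrow> real" where
  "optimal_order_cost K G y = (INF v\<in>{0..}. K * delta v + G (y + v))"

lemma delta_nonneg: "0 \<le> delta u"
  by (simp add: delta_def)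

lemma delta_le_1: "delta u \<le> 1"
  by (simp add: delta_def)

lemma optimal_order_cost_le:
  assumes "0 \<le> K" "bdd_below (range G)" "0 \<le> v"
  shows "optimal_order_cost K G y \<le> K * delta v + G (y + v)"
proof -
  obtain m where "\<And>x. m \<le> G x"
    using assms(2) by (auto simp: bdd_below_def)
  then have "bdd_below ((\<lambda>v. K * delta v + G (y + v)) ` {0..})"
    using assms(1) delta_nonneg by (intro bdd_belowI[of _ m]) (auto intro!: add_increasing)
  then show ?thesis
    unfolding optimal_order_cost_def using assms(3) by (auto intro: cINF_lower)
qed

lemma optimal_order_cost_le_self:
  assumes "0 \<le> K" "bdd_below (range G)"
  shows "optimal_order_cost K G y \<le> G y"
  using optimal_order_cost_le[OF assms, of 0 y] by (simp add: delta_def)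

lemma optimal_order_cost_le_order_up_to:
  assumes "0 \<le> K" "bdd_below (range G)" "y \<le> t"
  shows "optimal_order_cost K G y \<le> K + G t"
proof -
  have "optimal_order_cost K G y \<le> K * delta (t - y) + G t"
    using optimal_order_cost_le[OF assms(1,2), of "t - y" y] assms(3) by simp
  also have "\<dots> \<le> K + G t"
    using assms(1) delta_le_1 by (simp add: mult_left_le)
  finally show ?thesis .
qed

lemma K_convex_min_le:
  assumes G: "K_convex K G" and "0 \<le> K"
    and "a \<le> x" "x < b" "b < c" "c \<le> y"
  shows "min (G b) (K + G y) \<le> (c - b) / (c - a) * G x + (b - a) / (c - a) * (K + G y)"
proof -
  define l where "l = (c - b) / (c - a)"
  define \<mu> where "\<mu> = (y - b) / (y - x)"
  have l: "0 \<le> l" "(b - a) / (c - a) = 1 - l"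
    using assms by (auto simp: l_def weight_complement)
  have "G b \<le> \<mu> * G x + (1 - \<mu>) * (K + G y)"
    using K_convexD[OF G, of x b y] assms by (simp add: \<mu>_def weight_complement)
  have "l \<le> \<mu>"
  proof -
    have "(y - b) * (c - a) - (c - b) * (y - x) = (y - c) * (b - a) + (x - a) * (c - b)"
      by (simp add: algebra_simps)
    also have "\<dots> \<ge> 0"
      using assms by simp
    finally have "(c - b) * (y - x) \<le> (y - b) * (c - a)"
      by simp
    then show ?thesis
      using assms by (simp add: l_def \<mu>_def divide_simps)
  qed
  show ?thesis
  proof (cases "G x \<le> K + G y")
    case True
    have "(\<mu> - l) * (G x - (K + G y)) \<le> 0"
      using True \<open>l \<le> \<mu>\<close> by (simp add: mult_nonneg_nonpos)
    then have "\<mu> * G x + (1 - \<mu>) * (K + G y) \<le> l * G x + (1 - l) * (K + G y)"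
      by (simp add: algebra_simps)
    with \<open>G b \<le> _\<close> show ?thesis
      by (simp add: l_def[symmetric] l(2))
  next
    case False
    then have "l * (K + G y - G x) \<le> 0"
      using l(1) by (simp add: mult_nonneg_nonpos)
    then have "K + G y \<le> l * G x + (1 - l) * (K + G y)"
      by (simp add: algebra_simps)
    then show ?thesis
      by (simp add: l_def[symmetric] l(2))
  qed
qed

lemma weighted_INF_greatest:
  fixes t \<alpha> \<beta> :: real
  assumes "0 < \<alpha>" "0 < \<beta>" "A \<noteq> {}" "B \<noteq> {}"
    and "\<And>w z. w \<in> A \<Longrightarrow> z \<in> B \<Longrightarrow> t \<le> \<alpha> * \<phi> w + \<beta> * \<psi> z"
  shows "t \<le> \<alpha> * (INF w\<in>A. \<phi> w) + \<beta> * (INF z\<in>B. \<psi> z)"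
proof -
  have "(t - \<beta> * \<psi> z) / \<alpha> \<le> (INF w\<in>A. \<phi> w)" if "z \<in> B" for z
    using assms that by (intro cINF_greatest) (auto simp: pos_divide_le_eq algebra_simps)
  then have "(t - \<alpha> * (INF w\<in>A. \<phi> w)) / \<beta> \<le> (INF z\<in>B. \<psi> z)"
    using assms by (intro cINF_greatest) (auto simp: pos_divide_le_eq algebra_simps)
  then show ?thesis
    using assms by (simp add: pos_divide_le_eq algebra_simps)
qed

lemma K_convex_optimal_order_cost:
  assumes G: "K_convex K G" and K: "0 \<le> K" and bdd: "bdd_below (range G)"
  shows "K_convex K (optimal_order_cost K G)"
  unfolding K_convex_def
proof (intro allI impI)
  fix a b c :: real
  assume "a < b" "b < c"
  define l where "l = (c - b) / (c - a)"
  define l' where "l' = (b - a) / (c - a)"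
  let ?f = "optimal_order_cost K G"
  have l: "0 < l" "0 < l'" "l + l' = 1"
    using \<open>a < b\<close> \<open>b < c\<close> by (auto simp: l_def l'_def weight_complement)
  have pointwise: "?f b - l' * K \<le> l * (K * delta w + G (a + w)) + l' * (K * delta z + G (c + z))"
    if "0 \<le> w" "0 \<le> z" for w z
  proof (cases "a + w < b")
    case True
    have "?f b \<le> min (G b) (K + G (c + z))"
      using that \<open>b < c\<close>
      by (simp add: optimal_order_cost_le_self[OF K bdd] optimal_order_cost_le_order_up_to[OF K bdd])
    also have "\<dots> \<le> l * G (a + w) + l' * (K + G (c + z))"
      unfolding l_def l'_def using that True \<open>b < c\<close>
      by (intro K_convex_min_le[OF G K]) auto
    also have "\<dots> \<le> l' * K + (l * (K * delta w + G (a + w)) + l' * (K * delta z + G (c + z)))"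
      using l K delta_nonneg by (simp add: algebra_simps)
    finally show ?thesis
      by simp
  next
    case False
    \<comment> \<open>then from \<open>b\<close> one can order up to \<open>a + w\<close> itself, at cost at most \<open>K\<close>\<close>
    then have "delta w = 1"
      using \<open>a < b\<close> by (simp add: delta_def)
    have "?f b \<le> K + G (a + w)" "?f b \<le> K + G (c + z)"
      using False that \<open>b < c\<close> by (auto intro: optimal_order_cost_le_order_up_to[OF K bdd])
    then have "(l + l') * ?f b \<le> l * (K + G (a + w)) + l' * (K + G (c + z))"
      unfolding distrib_right using l by (intro add_mono mult_left_mono) auto
    also have "\<dots> \<le> l' * K + (l * (K * delta w + G (a + w)) + l' * (K * delta z + G (c + z)))"
      using l K delta_nonneg \<open>delta w = 1\<close> by (simp add: algebra_simps)
    finally show ?thesis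
      using l(3) by simp
  qed
  have "?f b - l' * K \<le> l * ?f a + l' * ?f c"
    unfolding optimal_order_cost_def[of K G a] optimal_order_cost_def[of K G c]
    by (rule weighted_INF_greatest) (use pointwise l in auto)
  then show "?f b \<le> (c - b) / (c - a) * ?f a + (b - a) / (c - a) * (K + ?f c)"
    unfolding l_def[symmetric] l'_def[symmetric] by (simp add: distrib_left)
qed

section \<open>The finite-horizon inventory problem\<close>

definition horizon_cost ::
    "real \<Rightarrow> real \<Rightarrow> real \<Rightarrow> nat \<Rightarrow> (nat \<Rightarrow> real) \<Rightarrow> real \<Rightarrow> (nat \<Rightarrow> real) \<Rightarrow> real" where
  "horizon_cost h p K n d y u = (\<Sum>i = 1..n. Hcost h p (traj y d u i) + K * delta (u i))"

definition optimal_cost :: "real \<Rightarrow> real \<Rightarrow> real \<Rightarrow> nat \<Rightarrow> (nat \<Rightarrow> real) \<Rightarrow> real \<Rightarrow> real" where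
  "optimal_cost h p K n d y = (INF u\<in>{u. \<forall>i. 0 \<le> u i}. horizon_cost h p K n d y u)"

lemma traj_Suc_shift: "traj y d u (Suc i) = traj (y - d 1 + u 1) (d \<circ> Suc) (u \<circ> Suc) i"
  by (induction i) auto

lemma traj_cong: "(\<And>i. 1 \<le> i \<Longrightarrow> u i = u' i) \<Longrightarrow> traj y d u i = traj y d u' i"
  by (induction i) auto

lemma horizon_cost_cong:
  "(\<And>i. 1 \<le> i \<Longrightarrow> u i = u' i) \<Longrightarrow> horizon_cost h p K n d y u = horizon_cost h p K n d y u'"
  unfolding horizon_cost_def by (intro sum.cong refl) (auto simp: traj_cong[of u u'])

lemma sum_from_2_eq_horizon_cost:
  "(\<Sum>i = 2..Suc n. Hcost h p (traj y d u i) + K * delta (u i))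
     = horizon_cost h p K n (d \<circ> Suc) (y - d 1 + u 1) (u \<circ> Suc)"
proof -
  have "(\<Sum>i = 2..Suc n. f i) = (\<Sum>i = 1..n. f (Suc i))" for f :: "nat \<Rightarrow> real"
    using sum.shift_bounds_cl_Suc_ivl[of f 1 n] by (simp add: numeral_2_eq_2 del: sum.cl_ivl_Suc)
  then show ?thesis
    unfolding horizon_cost_def by (simp only: traj_Suc_shift comp_apply)
qed

lemma horizon_cost_Suc:
  "horizon_cost h p K (Suc n) d y u
     = Hcost h p (y - d 1 + u 1) + K * delta (u 1)
       + horizon_cost h p K n (d \<circ> Suc) (y - d 1 + u 1) (u \<circ> Suc)"
proof -
  have "horizon_cost h p K (Suc n) d y u = Hcost h p (traj y d u 1) + K * delta (u 1)
      + (\<Sum>i = 2..Suc n. Hcost h p (traj y d u i) + K * delta (u i))"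
    unfolding horizon_cost_def by (subst sum.atLeast_Suc_atMost) (auto simp: numeral_2_eq_2 simp del: sum.cl_ivl_Suc)
  then show ?thesis
    by (simp add: sum_from_2_eq_horizon_cost del: sum.cl_ivl_Suc)
qed

lemma horizon_cost_nonneg:
  "0 \<le> h \<Longrightarrow> 0 \<le> p \<Longrightarrow> 0 \<le> K \<Longrightarrow> 0 \<le> horizon_cost h p K n d y u"
  unfolding horizon_cost_def Hcost_def by (intro sum_nonneg) (simp add: delta_nonneg)

lemma bdd_below_horizon_cost:
  "0 \<le> h \<Longrightarrow> 0 \<le> p \<Longrightarrow> 0 \<le> K \<Longrightarrow> bdd_below (horizon_cost h p K n d y ` A)"
  by (intro bdd_belowI[of _ 0]) (auto intro: horizon_cost_nonneg)

lemma optimal_cost_nonneg: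
  "0 \<le> h \<Longrightarrow> 0 \<le> p \<Longrightarrow> 0 \<le> K \<Longrightarrow> 0 \<le> optimal_cost h p K n d y"
  unfolding optimal_cost_def by (rule cINF_greatest) (auto intro: horizon_cost_nonneg exI[of _ "\<lambda>_. 0"])

lemma optimal_cost_0 [simp]: "optimal_cost h p K 0 d y = 0"
proof -
  have "{u::nat \<Rightarrow> real. \<forall>i. 0 \<le> u i} \<noteq> {}"
    by (auto intro: exI[of _ "\<lambda>_. 0"])
  then show ?thesis
    by (simp add: optimal_cost_def horizon_cost_def)
qed

definition cost_to_go :: "real \<Rightarrow> real \<Rightarrow> real \<Rightarrow> nat \<Rightarrow> (nat \<Rightarrow> real) \<Rightarrow> real \<Rightarrow> real" where
  "cost_to_go h p K n d x = Hcost h p x + optimal_cost h p K n d x"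

lemma cost_to_go_nonneg:
  "0 \<le> h \<Longrightarrow> 0 \<le> p \<Longrightarrow> 0 \<le> K \<Longrightarrow> 0 \<le> cost_to_go h p K n d x"
  unfolding cost_to_go_def by (intro add_nonneg_nonneg optimal_cost_nonneg) (auto simp: Hcost_def)

lemma optimal_cost_Suc:
  assumes "0 \<le> h" "0 \<le> p" "0 \<le> K"
  shows "optimal_cost h p K (Suc n) d y
    = optimal_order_cost K (cost_to_go h p K n (d \<circ> Suc)) (y - d 1)"
    (is "?V = optimal_order_cost K ?G (y - d 1)")
proof (rule antisym)
  have bdd: "bdd_below (range ?G)"
    using cost_to_go_nonneg[OF assms] by (intro bdd_belowI[of _ 0]) auto
  show "?V \<le> optimal_order_cost K ?G (y - d 1)"
    unfolding optimal_order_cost_def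
  proof (rule cINF_greatest)
    fix v :: real
    assume "v \<in> {0..}"
    have "?V - (Hcost h p (y - d 1 + v) + K * delta v) \<le> optimal_cost h p K n (d \<circ> Suc) (y - d 1 + v)"
      unfolding optimal_cost_def[of h p K n]
    proof (rule cINF_greatest)
      fix u' :: "nat \<Rightarrow> real"
      assume "u' \<in> {u. \<forall>i. 0 \<le> u i}"
      define u where "u i = (if i = 1 then v else u' (i - 1))" for i
      have "?V \<le> horizon_cost h p K (Suc n) d y u"
        unfolding optimal_cost_def using \<open>v \<in> {0..}\<close> \<open>u' \<in> _\<close>
        by (intro cINF_lower bdd_below_horizon_cost assms) (simp add: u_def)
      also have "\<dots> = Hcost h p (y - d 1 + v) + K * delta v
          + horizon_cost h p K n (d \<circ> Suc) (y - d 1 + v) u'"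
        unfolding horizon_cost_Suc by (auto simp: u_def intro: horizon_cost_cong)
      finally show "?V - (Hcost h p (y - d 1 + v) + K * delta v)
          \<le> horizon_cost h p K n (d \<circ> Suc) (y - d 1 + v) u'"
        by simp
    qed (auto intro: exI[of _ "\<lambda>_. 0"])
    then show "?V \<le> K * delta v + ?G (y - d 1 + v)"
      by (simp add: cost_to_go_def)
  qed simp
  show "optimal_order_cost K ?G (y - d 1) \<le> ?V"
    unfolding optimal_cost_def[of h p K "Suc n"]
  proof (rule cINF_greatest)
    fix u :: "nat \<Rightarrow> real"
    assume u: "u \<in> {u. \<forall>i. 0 \<le> u i}"
    have "optimal_order_cost K ?G (y - d 1)
        \<le> K * delta (u 1) + (Hcost h p (y - d 1 + u 1) + optimal_cost h p K n (d \<circ> Suc) (y - d 1 + u 1))"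
      using u optimal_order_cost_le[OF assms(3) bdd, of "u 1"] by (simp add: cost_to_go_def)
    also have "optimal_cost h p K n (d \<circ> Suc) (y - d 1 + u 1)
        \<le> horizon_cost h p K n (d \<circ> Suc) (y - d 1 + u 1) (u \<circ> Suc)"
      unfolding optimal_cost_def using u by (intro cINF_lower bdd_below_horizon_cost assms) simp
    finally show "optimal_order_cost K ?G (y - d 1) \<le> horizon_cost h p K (Suc n) d y u"
      by (simp add: horizon_cost_Suc)
  qed (auto intro: exI[of _ "\<lambda>_. 0"])
qed

theorem K_convex_cost_to_go:
  assumes "0 \<le> h" "0 \<le> p" "0 \<le> K"
  shows "K_convex K (cost_to_go h p K n d)"
proof (induction n arbitrary: d)
  case 0
  show ?case
    using convex_imp_K_convex[OF convex_Hcost[OF assms(1,2)] assms(3)]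
    by (simp add: cost_to_go_def[abs_def])
next
  case (Suc n)
  have "bdd_below (range (cost_to_go h p K n (d \<circ> Suc)))"
    using cost_to_go_nonneg[OF assms] by (intro bdd_belowI[of _ 0]) auto
  then have "K_convex K (\<lambda>x. optimal_order_cost K (cost_to_go h p K n (d \<circ> Suc)) (x + - d 1))"
    by (intro K_convex_translate K_convex_optimal_order_cost Suc.IH assms)
  then have "K_convex K (optimal_cost h p K (Suc n) d)"
    by (simp add: optimal_cost_Suc[OF assms, abs_def])
  then show ?case
    unfolding cost_to_go_def[abs_def] by (rule K_convex_add_convex[OF convex_Hcost[OF assms(1,2)]])
qed

lemma shift_nonneg_sequences: "(\<lambda>u. u \<circ> Suc) ` {u :: nat \<Rightarrow> real. \<forall>i. 0 \<le> u i} = {u. \<forall>i. 0 \<le> u i}"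
proof (intro equalityI subsetI)
  fix v :: "nat \<Rightarrow> real"
  assume "v \<in> {u. \<forall>i. 0 \<le> u i}"
  then have "(\<lambda>i. v (i - 1)) \<in> {u. \<forall>i. 0 \<le> u i}" and "v = (\<lambda>i. v (i - 1)) \<circ> Suc"
    by auto
  then show "v \<in> (\<lambda>u. u \<circ> Suc) ` {u. \<forall>i. 0 \<le> u i}"
    by blast
qed auto

lemma JN_Suc:
  assumes "0 < u1"
  shows "JN h p K (Suc n) x0 d u1 = K + cost_to_go h p K n (d \<circ> Suc) (x0 - d 1 + u1)"
proof -
  let ?A = "{u :: nat \<Rightarrow> real. \<forall>i. 0 \<le> u i}"
  let ?g = "horizon_cost h p K n (d \<circ> Suc) (x0 - d 1 + u1)"
  have tail: "(\<Sum>i = 2..Suc n. Hcost h p (traj x0 d (u(1 := u1)) i) + K * delta (u i)) = ?g (u \<circ> Suc)"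
    for u
  proof -
    have "(\<Sum>i = 2..Suc n. Hcost h p (traj x0 d (u(1 := u1)) i) + K * delta (u i))
        = (\<Sum>i = 2..Suc n. Hcost h p (traj x0 d (u(1 := u1)) i) + K * delta ((u(1 := u1)) i))"
      by (intro sum.cong) auto
    also have "\<dots> = ?g ((u(1 := u1)) \<circ> Suc)"
      by (simp only: sum_from_2_eq_horizon_cost fun_upd_same)
    also have "\<dots> = ?g (u \<circ> Suc)"
      by (intro horizon_cost_cong) auto
    finally show ?thesis .
  qed
  have "(INF u\<in>?A. ?g (u \<circ> Suc)) = (INF u\<in>(\<lambda>u. u \<circ> Suc) ` ?A. ?g u)"
    by (simp add: image_image)
  then have "(INF u\<in>?A. ?g (u \<circ> Suc)) = optimal_cost h p K n (d \<circ> Suc) (x0 - d 1 + u1)"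
    by (simp add: shift_nonneg_sequences optimal_cost_def)
  moreover have "JN h p K (Suc n) x0 d u1
      = Hcost h p (x0 - d 1 + u1) + K * delta u1 + (INF u\<in>?A. ?g (u \<circ> Suc))"
    unfolding JN_def tail by simp
  ultimately show ?thesis
    using assms by (simp add: cost_to_go_def delta_def)
qed

theorem lemma1:
  fixes h p K x0 :: real and N :: nat and d :: "nat \<Rightarrow> real"
  assumes "h > 0" and "p > 0" and "K > 0" and "N \<ge> 1"
    and "\<And>i. i \<in> {1..N} \<Longrightarrow> d i \<ge> 0"
    and "0 < u1" and "u1 < u1'" and "u1' < u1''"
  shows "K + JN h p K N x0 d u1'' \<ge>
           JN h p K N x0 d u1' + (u1'' - u1') / (u1' - u1) * (JN h p K N x0 d u1' - JN h p K N x0 d u1)"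
proof -
  obtain n where N: "N = Suc n"
    using \<open>N \<ge> 1\<close> by (cases N) auto
  have J: "JN h p K N x0 d u = K + cost_to_go h p K n (d \<circ> Suc) (u + (x0 - d 1))" if "0 < u" for u
    using JN_Suc[OF that] by (simp add: N algebra_simps)
  have "K_convex K (\<lambda>u. cost_to_go h p K n (d \<circ> Suc) (u + (x0 - d 1)))"
    by (rule K_convex_translate[OF K_convex_cost_to_go]) (use assms in auto)
  from K_convex_slope[OF this \<open>u1 < u1'\<close> \<open>u1' < u1''\<close>] show ?thesis
    using assms by (simp add: J)
qed

end
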